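(* Neither the forgetful functor $\mathbf{ubal}\to\mathsf{Set}$ nor the forgetful functor $\mathbf{balg}\to\mathsf{Set}$ has a left adjoint.
   Context: All rings are commutative and unital. An $\ell$-algebra is a commutative unital $\mathbb{R}$-algebra $A$ with a partial order $\le$ making $(A,\le)$ a lattice, such that $a\le b$ implies $a+c\le b+c$, $0\le a,b$ implies $0\le ab$, and $0\le a$, $0\le r\in\mathbb{R}$ imply $0\le r\cdot a$. $A$ is bounded if for each $a$ there is $n\in\mathbb{N}$ with $a\le n\cdot1$, archimedean if $n\cdot a\le b$ for all $n$ implies $a\le0$. $\mathbf{bal}$ is the category of bounded archimedean $\ell$-algebras and unital $\ell$-algebra homomorphisms. For $A\in\mathbf{bal}$, $|a|=a\vee(-a)$ and $\|a\|=\inf\{r\in\mathbb{R}\mid |a|\le r\cdot1\}$; $A$ is uniformly complete if it is complete with respect to this norm, and $\mathbf{ubal}$ is the full subcategory of uniformly complete objects. An $\ell$-algebra is Dedekind complete if every subset bounded above has a least upper bound. The idempotents $\mathrm{Id}(A)$ of a commutative ring form a boolean algebra with $e\vee f=e+f-ef$, $e\wedge f=ef$, $\neg e=1-e$. A basic algebra is a Dedekind complete $A\in\mathbf{bal}$ with $\mathrm{Id}(A)$ atomic. A normal homomorphism between basic algebras is a $\mathbf{bal}$-morphism preserving all existing joins and meets. $\mathbf{balg}$ is the category of basic algebras and normal homomorphisms. *)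

theory Defs
  imports Complex_Main
begin

record 'a lalg =
  carrier :: "'a set"
  zero :: 'a
  one :: 'a
  add :: "'a \<Rightarrow> 'a \<Rightarrow> 'a"
  neg :: "'a \<Rightarrow> 'a"
  mul :: "'a \<Rightarrow> 'a \<Rightarrow> 'a"
  smul :: "real \<Rightarrow> 'a \<Rightarrow> 'a"
  le :: "'a \<Rightarrow> 'a \<Rightarrow> bool"

definition comm_ralg :: "'a lalg \<Rightarrow> bool" where
  "comm_ralg A \<longleftrightarrow>
     zero A \<in> carrier A \<and> one A \<in> carrier A \<and>
     (\<forall>a\<in>carrier A. \<forall>b\<in>carrier A. add A a b \<in> carrier A \<and> mul A a b \<in> carrier A) \<and>
     (\<forall>a\<in>carrier A. neg A a \<in> carrier A) \<and>
     (\<forall>r. \<forall>a\<in>carrier A. smul A r a \<in> carrier A) \<and>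
     (\<forall>a\<in>carrier A. \<forall>b\<in>carrier A. \<forall>c\<in>carrier A.
        add A (add A a b) c = add A a (add A b c) \<and>
        mul A (mul A a b) c = mul A a (mul A b c) \<and>
        mul A a (add A b c) = add A (mul A a b) (mul A a c)) \<and>
     (\<forall>a\<in>carrier A. \<forall>b\<in>carrier A. add A a b = add A b a \<and> mul A a b = mul A b a) \<and>
     (\<forall>a\<in>carrier A. add A a (zero A) = a \<and> add A a (neg A a) = zero A \<and>
        mul A a (one A) = a) \<and>
     (\<forall>r s. \<forall>a\<in>carrier A. \<forall>b\<in>carrier A.
        smul A r (add A a b) = add A (smul A r a) (smul A r b) \<and>
        smul A (r + s) a = add A (smul A r a) (smul A s a) \<and>
        smul A (r * s) a = smul A r (smul A s a) \<and>
        smul A r (mul A a b) = mul A (smul A r a) b) \<and>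
     (\<forall>a\<in>carrier A. smul A 1 a = a)"

definition is_lub :: "'a lalg \<Rightarrow> 'a set \<Rightarrow> 'a \<Rightarrow> bool" where
  "is_lub A S s \<longleftrightarrow> s \<in> carrier A \<and> (\<forall>x\<in>S. le A x s) \<and>
     (\<forall>u\<in>carrier A. (\<forall>x\<in>S. le A x u) \<longrightarrow> le A s u)"

definition is_glb :: "'a lalg \<Rightarrow> 'a set \<Rightarrow> 'a \<Rightarrow> bool" where
  "is_glb A S s \<longleftrightarrow> s \<in> carrier A \<and> (\<forall>x\<in>S. le A s x) \<and>
     (\<forall>u\<in>carrier A. (\<forall>x\<in>S. le A u x) \<longrightarrow> le A u s)"

definition ljoin :: "'a lalg \<Rightarrow> 'a \<Rightarrow> 'a \<Rightarrow> 'a" where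
  "ljoin A a b = (THE s. is_lub A {a, b} s)"

definition lmeet :: "'a lalg \<Rightarrow> 'a \<Rightarrow> 'a \<Rightarrow> 'a" where
  "lmeet A a b = (THE s. is_glb A {a, b} s)"

definition l_algebra :: "'a lalg \<Rightarrow> bool" where
  "l_algebra A \<longleftrightarrow> comm_ralg A \<and>
     (\<forall>a\<in>carrier A. le A a a) \<and>
     (\<forall>a\<in>carrier A. \<forall>b\<in>carrier A. le A a b \<and> le A b a \<longrightarrow> a = b) \<and>
     (\<forall>a\<in>carrier A. \<forall>b\<in>carrier A. \<forall>c\<in>carrier A. le A a b \<and> le A b c \<longrightarrow> le A a c) \<and>
     (\<forall>a\<in>carrier A. \<forall>b\<in>carrier A. (\<exists>s. is_lub A {a, b} s) \<and> (\<exists>s. is_glb A {a, b} s)) \<and>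
     (\<forall>a\<in>carrier A. \<forall>b\<in>carrier A. \<forall>c\<in>carrier A. le A a b \<longrightarrow> le A (add A a c) (add A b c)) \<and>
     (\<forall>a\<in>carrier A. \<forall>b\<in>carrier A. le A (zero A) a \<and> le A (zero A) b \<longrightarrow> le A (zero A) (mul A a b)) \<and>
     (\<forall>a\<in>carrier A. \<forall>r::real. le A (zero A) a \<and> 0 \<le> r \<longrightarrow> le A (zero A) (smul A r a))"

definition bounded_lalg :: "'a lalg \<Rightarrow> bool" where
  "bounded_lalg A \<longleftrightarrow> (\<forall>a\<in>carrier A. \<exists>n::nat. le A a (smul A (real n) (one A)))"

definition archimedean_lalg :: "'a lalg \<Rightarrow> bool" where
  "archimedean_lalg A \<longleftrightarrow> (\<forall>a\<in>carrier A. \<forall>b\<in>carrier A.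
     (\<forall>n::nat. le A (smul A (real n) a) b) \<longrightarrow> le A a (zero A))"

definition bal :: "'a lalg \<Rightarrow> bool" where
  "bal A \<longleftrightarrow> l_algebra A \<and> bounded_lalg A \<and> archimedean_lalg A"

definition labs :: "'a lalg \<Rightarrow> 'a \<Rightarrow> 'a" where
  "labs A a = ljoin A a (neg A a)"

definition lnorm :: "'a lalg \<Rightarrow> 'a \<Rightarrow> real" where
  "lnorm A a = Inf {r::real. le A (labs A a) (smul A r (one A))}"

definition uniformly_complete :: "'a lalg \<Rightarrow> bool" where
  "uniformly_complete A \<longleftrightarrow> (\<forall>s::nat \<Rightarrow> 'a. range s \<subseteq> carrier A \<longrightarrow>
     (\<forall>e>0. \<exists>N. \<forall>m\<ge>N. \<forall>n\<ge>N. lnorm A (add A (s m) (neg A (s n))) < e) \<longrightarrow>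
     (\<exists>a\<in>carrier A. (\<lambda>n. lnorm A (add A (s n) (neg A a))) \<longlonglongrightarrow> 0))"

definition ubal :: "'a lalg \<Rightarrow> bool" where
  "ubal A \<longleftrightarrow> bal A \<and> uniformly_complete A"

definition dedekind_complete :: "'a lalg \<Rightarrow> bool" where
  "dedekind_complete A \<longleftrightarrow> (\<forall>S. S \<subseteq> carrier A \<and> S \<noteq> {} \<and>
     (\<exists>u\<in>carrier A. \<forall>x\<in>S. le A x u) \<longrightarrow> (\<exists>s. is_lub A S s))"

definition idems :: "'a lalg \<Rightarrow> 'a set" where
  "idems A = {e \<in> carrier A. mul A e e = e}"

text \<open>In the boolean algebra of idempotents, e \<le> f iff ef = e.\<close>
definition idem_atom :: "'a lalg \<Rightarrow> 'a \<Rightarrow> bool" where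
  "idem_atom A a \<longleftrightarrow> a \<in> idems A \<and> a \<noteq> zero A \<and>
     (\<forall>e\<in>idems A. mul A e a = e \<longrightarrow> e = zero A \<or> e = a)"

definition idems_atomic :: "'a lalg \<Rightarrow> bool" where
  "idems_atomic A \<longleftrightarrow> (\<forall>e\<in>idems A. e \<noteq> zero A \<longrightarrow>
     (\<exists>a. idem_atom A a \<and> mul A a e = a))"

text \<open>Objects of balg: basic algebras.\<close>
definition basic_algebra :: "'a lalg \<Rightarrow> bool" where
  "basic_algebra A \<longleftrightarrow> bal A \<and> dedekind_complete A \<and> idems_atomic A"

text \<open>Morphisms of bal (and ubal): unital l-algebra homomorphisms.\<close>
definition bal_hom :: "'a lalg \<Rightarrow> 'b lalg \<Rightarrow> ('a \<Rightarrow> 'b) \<Rightarrow> bool" where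
  "bal_hom A B h \<longleftrightarrow> h ` carrier A \<subseteq> carrier B \<and>
     h (one A) = one B \<and>
     (\<forall>a\<in>carrier A. \<forall>b\<in>carrier A.
        h (add A a b) = add B (h a) (h b) \<and>
        h (mul A a b) = mul B (h a) (h b) \<and>
        h (ljoin A a b) = ljoin B (h a) (h b) \<and>
        h (lmeet A a b) = lmeet B (h a) (h b)) \<and>
     (\<forall>r. \<forall>a\<in>carrier A. h (smul A r a) = smul B r (h a))"

text \<open>Morphisms of balg: normal homomorphisms.\<close>
definition normal_hom :: "'a lalg \<Rightarrow> 'b lalg \<Rightarrow> ('a \<Rightarrow> 'b) \<Rightarrow> bool" where
  "normal_hom A B h \<longleftrightarrow> bal_hom A B h \<and>
     (\<forall>S s. S \<subseteq> carrier A \<and> is_lub A S s \<longrightarrow> is_lub B (h ` S) (h s)) \<and>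
     (\<forall>S s. S \<subseteq> carrier A \<and> is_glb A S s \<longrightarrow> is_glb B (h ` S) (h s))"

text \<open>(F, eta) is a universal arrow from the set X to the forgetful functor of
  the category with objects Obj and morphisms Hom, tested against all objects
  whose carrier lies in the type of the test objects.\<close>
definition universal_arrow ::
  "('a lalg \<Rightarrow> bool) \<Rightarrow> ('b lalg \<Rightarrow> bool) \<Rightarrow> ('a lalg \<Rightarrow> 'b lalg \<Rightarrow> ('a \<Rightarrow> 'b) \<Rightarrow> bool)
     \<Rightarrow> 'x set \<Rightarrow> 'a lalg \<Rightarrow> ('x \<Rightarrow> 'a) \<Rightarrow> bool" where
  "universal_arrow ObjF ObjB Hom X F eta \<longleftrightarrow> ObjF F \<and> eta ` X \<subseteq> carrier F \<and>
     (\<forall>B f. ObjB B \<and> f ` X \<subseteq> carrier B \<longrightarrow>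
        (\<exists>g. Hom F B g \<and> (\<forall>x\<in>X. g (eta x) = f x)) \<and>
        (\<forall>g1 g2. Hom F B g1 \<and> Hom F B g2 \<and> (\<forall>x\<in>X. g1 (eta x) = f x) \<and>
           (\<forall>x\<in>X. g2 (eta x) = f x) \<longrightarrow> (\<forall>a\<in>carrier F. g1 a = g2 a)))"

end

theory Submission
  imports Defs
begin

text \<open>A free object on a nonempty set X would have to admit, for every map X \<rightarrow> \<real>,
  a morphism into the (uniformly complete, basic) algebra \<real> extending it. Morphisms of
  \<open>\<ell>\<close>-algebras preserve joins and hence the order, and \<open>\<eta> x \<le> n \<cdot> 1\<close> for some n by
  boundedness of the free object, so no morphism can send \<open>\<eta> x\<close> to n + 1.\<close>

lemma l_algebra_le_refl: "l_algebra A \<Longrightarrow> a \<in> carrier A \<Longrightarrow> le A a a"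
  by (simp add: l_algebra_def)

lemma l_algebra_le_antisym:
  "l_algebra A \<Longrightarrow> a \<in> carrier A \<Longrightarrow> b \<in> carrier A \<Longrightarrow> le A a b \<Longrightarrow> le A b a \<Longrightarrow> a = b"
  unfolding l_algebra_def by blast

lemma l_algebra_ex_lub_pair:
  "l_algebra A \<Longrightarrow> a \<in> carrier A \<Longrightarrow> b \<in> carrier A \<Longrightarrow> \<exists>s. is_lub A {a, b} s"
  unfolding l_algebra_def by blast

lemma l_algebra_smul_one_carrier: "l_algebra A \<Longrightarrow> smul A r (one A) \<in> carrier A"
  unfolding l_algebra_def comm_ralg_def by simp

lemma l_algebra_is_lub_unique:
  assumes "l_algebra A" "is_lub A S s" "is_lub A S t"
  shows "s = t"
proof -
  have "le A s t" "le A t s" "s \<in> carrier A" "t \<in> carrier A"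
    using assms(2,3) unfolding is_lub_def by blast+
  then show ?thesis using l_algebra_le_antisym[OF assms(1)] by blast
qed

lemma l_algebra_ljoin_is_lub:
  assumes "l_algebra A" "a \<in> carrier A" "b \<in> carrier A"
  shows "is_lub A {a, b} (ljoin A a b)"
proof -
  obtain s where s: "is_lub A {a, b} s"
    using l_algebra_ex_lub_pair[OF assms] by blast
  show ?thesis
    unfolding ljoin_def
    by (rule theI[where P = "is_lub A {a, b}", OF s]) (rule l_algebra_is_lub_unique[OF assms(1) _ s])
qed

lemma l_algebra_ljoin_eq_right:
  assumes A: "l_algebra A" and a: "a \<in> carrier A" and b: "b \<in> carrier A" and le: "le A a b"
  shows "ljoin A a b = b"
proof -
  have "is_lub A {a, b} b"
    using le b l_algebra_le_refl[OF A b] unfolding is_lub_def by blast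
  then show ?thesis
    using l_algebra_is_lub_unique[OF A l_algebra_ljoin_is_lub[OF A a b]] by simp
qed

lemma bal_hom_carrier: "bal_hom A B g \<Longrightarrow> a \<in> carrier A \<Longrightarrow> g a \<in> carrier B"
  unfolding bal_hom_def by blast

lemma bal_hom_ljoin:
  "bal_hom A B g \<Longrightarrow> a \<in> carrier A \<Longrightarrow> b \<in> carrier A \<Longrightarrow> g (ljoin A a b) = ljoin B (g a) (g b)"
  unfolding bal_hom_def by blast

lemma bal_hom_smul_one:
  "bal_hom A B g \<Longrightarrow> one A \<in> carrier A \<Longrightarrow> g (smul A r (one A)) = smul B r (one B)"
  unfolding bal_hom_def by simp

lemma bal_hom_mono:
  assumes A: "l_algebra A" and B: "l_algebra B" and g: "bal_hom A B g"
    and a: "a \<in> carrier A" and b: "b \<in> carrier A" and le: "le A a b"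
  shows "le B (g a) (g b)"
proof -
  have "g b = ljoin B (g a) (g b)"
    using l_algebra_ljoin_eq_right[OF A a b le] bal_hom_ljoin[OF g a b] by simp
  then show ?thesis
    using l_algebra_ljoin_is_lub[OF B bal_hom_carrier[OF g a] bal_hom_carrier[OF g b]]
    unfolding is_lub_def by simp
qed

definition real_lalg :: "real lalg" where
  "real_lalg = \<lparr>carrier = UNIV, zero = 0, one = 1, add = (+), neg = uminus, mul = (*),
                smul = (*), le = (\<le>)\<rparr>"

lemma real_lalg_simps [simp]:
  "carrier real_lalg = UNIV" "zero real_lalg = 0" "one real_lalg = 1"
  "add real_lalg = (+)" "neg real_lalg = uminus" "mul real_lalg = (*)"
  "smul real_lalg = (*)" "le real_lalg = (\<le>)"
  by (simp_all add: real_lalg_def)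

lemma real_lalg_is_lub_pair: "is_lub real_lalg {a, b} s \<longleftrightarrow> s = max a b"
  unfolding is_lub_def by (auto simp: max_def)

lemma real_lalg_is_glb_pair: "is_glb real_lalg {a, b} s \<longleftrightarrow> s = min a b"
  unfolding is_glb_def by (auto simp: min_def intro: antisym)

lemma real_lalg_ljoin [simp]: "ljoin real_lalg a b = max a b"
  unfolding ljoin_def real_lalg_is_lub_pair by simp

lemma real_lalg_lnorm: "lnorm real_lalg a = \<bar>a\<bar>"
proof -
  have "{r. max a (- a) \<le> r} = {\<bar>a\<bar>..}" by (auto simp: abs_if)
  then show ?thesis unfolding lnorm_def labs_def by simp
qed

lemma real_lalg_archimedean: "archimedean_lalg real_lalg"
  unfolding archimedean_lalg_def
proof (intro ballI impI)
  fix a b :: real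
  assume bounded: "\<forall>n::nat. le real_lalg (smul real_lalg (real n) a) b"
  show "le real_lalg a (zero real_lalg)"
  proof (rule ccontr)
    assume "\<not> le real_lalg a (zero real_lalg)"
    then obtain n where "b < real n * a"
      using ex_less_of_nat_mult[of a b] by auto
    with bounded show False by (simp add: not_le[symmetric])
  qed
qed

lemma real_lalg_l_algebra: "l_algebra real_lalg"
  unfolding l_algebra_def comm_ralg_def
  by (simp add: algebra_simps) (metis real_lalg_is_lub_pair real_lalg_is_glb_pair)

lemma real_lalg_bal: "bal real_lalg"
  unfolding bal_def bounded_lalg_def
  by (simp add: real_lalg_l_algebra real_lalg_archimedean real_arch_simple)

lemma real_lalg_uniformly_complete: "uniformly_complete real_lalg"
  unfolding uniformly_complete_def real_lalg_lnorm
proof (intro allI impI)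
  fix s :: "nat \<Rightarrow> real"
  assume "\<forall>e>0. \<exists>N. \<forall>m\<ge>N. \<forall>n\<ge>N. \<bar>add real_lalg (s m) (neg real_lalg (s n))\<bar> < e"
  then have "Cauchy s" by (intro metric_CauchyI) (simp add: dist_real_def)
  then obtain L where "s \<longlonglongrightarrow> L"
    using Cauchy_convergent_iff convergent_def by blast
  then have "(\<lambda>n. \<bar>s n - L\<bar>) \<longlonglongrightarrow> 0"
    using LIM_zero tendsto_rabs_zero by blast
  then show "\<exists>a\<in>carrier real_lalg. (\<lambda>n. \<bar>add real_lalg (s n) (neg real_lalg a)\<bar>) \<longlonglongrightarrow> 0"
    by auto
qed

lemma real_lalg_ubal: "ubal real_lalg"
  by (simp add: ubal_def real_lalg_bal real_lalg_uniformly_complete)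

lemma real_lalg_dedekind_complete: "dedekind_complete real_lalg"
  unfolding dedekind_complete_def
proof (intro allI impI)
  fix S :: "real set"
  assume S: "S \<subseteq> carrier real_lalg \<and> S \<noteq> {} \<and> (\<exists>u\<in>carrier real_lalg. \<forall>x\<in>S. le real_lalg x u)"
  then have "bdd_above S" by (auto simp: bdd_above_def)
  with S have "is_lub real_lalg S (Sup S)"
    unfolding is_lub_def by (auto intro: cSup_upper cSup_least)
  then show "\<exists>s. is_lub real_lalg S s" by blast
qed

lemma real_lalg_idems: "idems real_lalg = {0, 1}"
  unfolding idems_def by auto

lemma real_lalg_idems_atomic: "idems_atomic real_lalg"
  unfolding idems_atomic_def idem_atom_def real_lalg_idems
  by (intro ballI impI exI[of _ 1]) auto

lemma real_lalg_basic_algebra: "basic_algebra real_lalg"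
  by (simp add: basic_algebra_def real_lalg_bal real_lalg_dedekind_complete real_lalg_idems_atomic)

lemma bal_hom_to_real_bounded:
  assumes A: "bal A" and a: "a \<in> carrier A"
  obtains n :: nat where "\<And>g. bal_hom A real_lalg g \<Longrightarrow> g a \<le> real n"
proof -
  have A_lalg: "l_algebra A" using A by (simp add: bal_def)
  obtain n :: nat where n: "le A a (smul A (real n) (one A))"
    using A a unfolding bal_def bounded_lalg_def by blast
  have one: "one A \<in> carrier A"
    using A_lalg unfolding l_algebra_def comm_ralg_def by simp
  have "g a \<le> real n" if g: "bal_hom A real_lalg g" for g
  proof -
    have "g a \<le> g (smul A (real n) (one A))"
      using bal_hom_mono[OF A_lalg real_lalg_l_algebra g a l_algebra_smul_one_carrier[OF A_lalg] n]
      by simp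
    also have "\<dots> = real n"
      using bal_hom_smul_one[OF g one] by simp
    finally show ?thesis .
  qed
  then show ?thesis by (rule that)
qed

lemma bal_no_free_extension_to_real:
  assumes A: "bal A" and x: "x \<in> X" and eta: "eta ` X \<subseteq> carrier A"
    and extend: "\<And>f. \<exists>g. bal_hom A real_lalg g \<and> (\<forall>y\<in>X. g (eta y) = f y)"
  shows False
proof -
  obtain n :: nat where bound: "\<And>g. bal_hom A real_lalg g \<Longrightarrow> g (eta x) \<le> real n"
    using bal_hom_to_real_bounded[OF A] x eta by blast
  obtain g where "bal_hom A real_lalg g" "g (eta x) = real n + 1"
    using extend[of "\<lambda>_. real n + 1"] x by blast
  with bound show False by force
qed

lemma ubal_imp_bal: "ubal A \<Longrightarrow> bal A"
  by (simp add: ubal_def)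

lemma basic_algebra_imp_bal: "basic_algebra A \<Longrightarrow> bal A"
  by (simp add: basic_algebra_def)

lemma normal_hom_imp_bal_hom: "normal_hom A B g \<Longrightarrow> bal_hom A B g"
  by (simp add: normal_hom_def)

lemma no_universal_arrow_when_real_is_object:
  assumes u: "universal_arrow Obj ObjR Hom X F eta" and x: "x \<in> X"
    and Obj_bal: "\<And>A. Obj A \<Longrightarrow> bal A" and real: "ObjR real_lalg"
    and Hom_bal_hom: "\<And>A B g. Hom A B g \<Longrightarrow> bal_hom A B g"
  shows False
proof (rule bal_no_free_extension_to_real[OF _ x])
  show "bal F" "eta ` X \<subseteq> carrier F"
    using u Obj_bal unfolding universal_arrow_def by auto
  show "\<exists>g. bal_hom F real_lalg g \<and> (\<forall>y\<in>X. g (eta y) = f y)" for f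
    using u real Hom_bal_hom unfolding universal_arrow_def by fastforce
qed

theorem mainTheorem3:
  shows "\<not> (\<forall>X::'x set. \<exists>(F::'a lalg) eta.
             universal_arrow ubal (ubal :: real lalg \<Rightarrow> bool) bal_hom X F eta)
       \<and> \<not> (\<forall>X::'x set. \<exists>(F::'b lalg) eta.
             universal_arrow basic_algebra (basic_algebra :: real lalg \<Rightarrow> bool) normal_hom X F eta)"
proof (intro conjI notI)
  assume "\<forall>X::'x set. \<exists>(F::'a lalg) eta. universal_arrow ubal (ubal :: real lalg \<Rightarrow> bool) bal_hom X F eta"
  then obtain F :: "'a lalg" and eta
    where "universal_arrow ubal (ubal :: real lalg \<Rightarrow> bool) bal_hom (UNIV::'x set) F eta" by blast
  then show False
    by (rule no_universal_arrow_when_real_is_object)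
      (simp_all add: ubal_imp_bal real_lalg_ubal)
next
  assume "\<forall>X::'x set. \<exists>(F::'b lalg) eta.
    universal_arrow basic_algebra (basic_algebra :: real lalg \<Rightarrow> bool) normal_hom X F eta"
  then obtain F :: "'b lalg" and eta
    where "universal_arrow basic_algebra (basic_algebra :: real lalg \<Rightarrow> bool) normal_hom (UNIV::'x set) F eta"
    by blast
  then show False
    by (rule no_universal_arrow_when_real_is_object)
      (simp_all add: basic_algebra_imp_bal real_lalg_basic_algebra normal_hom_imp_bal_hom)
qed

end
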